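(* Let $A\in\mathbb{R}^{m\times n}$ with $A\geq 0$ and $A^{\dagger}\geq 0$, and let $(U_k^{(i)},V_k^{(i)},E_k)_{k=1}^{p}$, $i=1,2$, be two proper weak regular multisplittings of $A$ (with the same weighting matrices $E_k$) such that $R(E_k)\subseteq R(A^{T})$ for each $k=1,\ldots,p$. If $[U_k^{(1)}]^{\dagger}\geq[U_k^{(2)}]^{\dagger}$ for each $k=1,\ldots,p$, then $\rho(H_1)\leq\rho(H_2)<1$, where $H_i=\sum_{k=1}^{p}E_k[U_k^{(i)}]^{\dagger}V_k^{(i)}$ for $i=1,2$.
   Context: $A^{\dagger}$ denotes the Moore–Penrose inverse, $\rho(\cdot)$ the spectral radius, $R(\cdot)$, $N(\cdot)$ range and null space; inequalities are entrywise. A splitting $A=U-V$ is proper if $R(U)=R(A)$ and $N(U)=N(A)$; a proper splitting is proper weak regular if $U^{\dagger}\geq 0$ and $U^{\dagger}V\geq 0$. A proper weak regular multisplitting of $A$ is a triplet $(U_k,V_k,E_k)_{k=1}^{p}$ where each $A=U_k-V_k$ is a proper weak regular splitting and each $E_k\geq 0$ is an $n\times n$ diagonal matrix with $\sum_{k=1}^{p}E_k=I_n$. *)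

theory Defs
  imports "Jordan_Normal_Form.Spectral_Radius"
begin

definition nonneg_mat :: "real mat \<Rightarrow> bool" where
  "nonneg_mat A \<longleftrightarrow> (\<forall>i < dim_row A. \<forall>j < dim_col A. A $$ (i, j) \<ge> 0)"

definition mat_ge :: "real mat \<Rightarrow> real mat \<Rightarrow> bool" where
  "mat_ge A B \<longleftrightarrow> dim_row A = dim_row B \<and> dim_col A = dim_col B \<and>
     (\<forall>i < dim_row A. \<forall>j < dim_col A. A $$ (i, j) \<ge> B $$ (i, j))"

definition is_mp_inverse :: "real mat \<Rightarrow> real mat \<Rightarrow> bool" where
  "is_mp_inverse A X \<longleftrightarrow> X \<in> carrier_mat (dim_col A) (dim_row A) \<and>
     A * X * A = A \<and> X * A * X = X \<and>
     transpose_mat (A * X) = A * X \<and> transpose_mat (X * A) = X * A"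

text \<open>Moore--Penrose inverse (exists and is unique for every real matrix).\<close>
definition mp_inverse :: "real mat \<Rightarrow> real mat" where
  "mp_inverse A = (THE X. is_mp_inverse A X)"

definition range_mat :: "real mat \<Rightarrow> real vec set" where
  "range_mat A = {A *\<^sub>v x | x. x \<in> carrier_vec (dim_col A)}"

definition null_mat :: "real mat \<Rightarrow> real vec set" where
  "null_mat A = {x \<in> carrier_vec (dim_col A). A *\<^sub>v x = 0\<^sub>v (dim_row A)}"

definition proper_splitting :: "real mat \<Rightarrow> real mat \<Rightarrow> real mat \<Rightarrow> bool" where
  "proper_splitting A U V \<longleftrightarrow>
     U \<in> carrier_mat (dim_row A) (dim_col A) \<and> V \<in> carrier_mat (dim_row A) (dim_col A) \<and>
     A = U - V \<and> range_mat U = range_mat A \<and> null_mat U = null_mat A"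

definition proper_weak_regular_splitting :: "real mat \<Rightarrow> real mat \<Rightarrow> real mat \<Rightarrow> bool" where
  "proper_weak_regular_splitting A U V \<longleftrightarrow>
     proper_splitting A U V \<and> nonneg_mat (mp_inverse U) \<and> nonneg_mat (mp_inverse U * V)"

fun mat_sum :: "nat \<Rightarrow> nat \<Rightarrow> (nat \<Rightarrow> real mat) \<Rightarrow> nat \<Rightarrow> real mat" where
  "mat_sum nr nc f 0 = 0\<^sub>m nr nc"
| "mat_sum nr nc f (Suc p) = mat_sum nr nc f p + f p"

definition proper_weak_regular_multisplitting ::
  "real mat \<Rightarrow> nat \<Rightarrow> (nat \<Rightarrow> real mat) \<Rightarrow> (nat \<Rightarrow> real mat) \<Rightarrow> (nat \<Rightarrow> real mat) \<Rightarrow> bool" where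
  "proper_weak_regular_multisplitting A p U V E \<longleftrightarrow>
     (\<forall>k < p. proper_weak_regular_splitting A (U k) (V k) \<and>
              E k \<in> carrier_mat (dim_col A) (dim_col A) \<and> diagonal_mat (E k) \<and> nonneg_mat (E k)) \<and>
     mat_sum (dim_col A) (dim_col A) E p = 1\<^sub>m (dim_col A)"

definition multisplitting_iter :: "nat \<Rightarrow> nat \<Rightarrow> (nat \<Rightarrow> real mat) \<Rightarrow> (nat \<Rightarrow> real mat) \<Rightarrow> (nat \<Rightarrow> real mat) \<Rightarrow> real mat" where
  "multisplitting_iter n p U V E = mat_sum n n (\<lambda>k. E k * mp_inverse (U k) * V k) p"

definition rho :: "real mat \<Rightarrow> real" where
  "rho H = spectral_radius (map_mat complex_of_real H)"

end

theory Submission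
  imports Defs
begin

text \<open>The weight condition \<open>R(E\<^sub>k) \<subseteq> R(A\<^sup>T)\<close> together with \<open>\<Sum> E\<^sub>k = I\<close> forces
  \<open>N(A) = {0}\<close>. Then every \<open>U\<^sub>k\<close> has full column rank, \<open>U\<^sub>k\<^sup>\<dagger> = (U\<^sub>k\<^sup>T U\<^sub>k)\<^sup>-\<^sup>1 U\<^sub>k\<^sup>T\<close> is a left
  inverse of \<open>U\<^sub>k\<close>, and \<open>U\<^sub>k\<^sup>\<dagger> V\<^sub>k = I - U\<^sub>k\<^sup>\<dagger> A\<close>. So the comparison of the \<open>U\<^sub>k\<^sup>\<dagger>\<close> and \<open>A \<ge> 0\<close>
  give \<open>0 \<le> H\<^sub>1 \<le> H\<^sub>2\<close>, and the spectral radius is monotone on nonnegative matrices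
  (a Collatz--Wielandt argument). For \<open>\<rho>(H\<^sub>2) < 1\<close> take \<open>x = A\<^sup>\<dagger> \<one>\<close>: as \<open>R(U\<^sub>k) = R(A)\<close>,
  \<open>U\<^sub>k\<^sup>\<dagger> A A\<^sup>\<dagger> = U\<^sub>k\<^sup>\<dagger>\<close>, hence \<open>H\<^sub>2 x = x - \<Sum> E\<^sub>k U\<^sub>k\<^sup>\<dagger> \<one> < x\<close> entrywise; this forces \<open>x > 0\<close>, and a
  nonnegative matrix that strictly shrinks a positive vector has spectral radius below 1.\<close>

lemma mult_mat_vec_index_sum:
  fixes A :: "'a :: comm_semiring_0 mat"
  assumes "A \<in> carrier_mat nr n" "v \<in> carrier_vec n" "i < nr"
  shows "(A *\<^sub>v v) $ i = (\<Sum>l<n. A $$ (i, l) * v $ l)"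
  using assms by (simp add: scalar_prod_def lessThan_atLeast0)

lemma index_mult_mat_sum:
  fixes A B :: "'a :: comm_semiring_0 mat"
  assumes "A \<in> carrier_mat nr n" "B \<in> carrier_mat n nc" "i < nr" "j < nc"
  shows "(A * B) $$ (i, j) = (\<Sum>l<n. A $$ (i, l) * B $$ (l, j))"
  using assms by (simp add: scalar_prod_def lessThan_atLeast0)

lemma real_scalar_prod_self_eq_0:
  fixes v :: "real vec"
  assumes "v \<in> carrier_vec n" and "v \<bullet> v = 0"
  shows "v = 0\<^sub>v n"
  using assms conjugate_square_eq_0_vec[of v n] by (simp add: scalar_prod_def)

lemma nonzero_vec_index:
  assumes "v \<in> carrier_vec n" and "v \<noteq> 0\<^sub>v n"
  obtains j where "j < n" and "v $ j \<noteq> 0"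
  using assms by (metis eq_vecI carrier_vecD index_zero_vec(1,2))

section \<open>Nonnegative matrices and the spectral radius\<close>

lemma nonneg_matD:
  assumes "nonneg_mat A" and "A \<in> carrier_mat nr nc" and "i < nr" and "j < nc"
  shows "0 \<le> A $$ (i, j)"
  using assms unfolding nonneg_mat_def by simp

lemma mat_geD:
  assumes "mat_ge A B" and "A \<in> carrier_mat nr nc" and "i < nr" and "j < nc"
  shows "B $$ (i, j) \<le> A $$ (i, j)"
  using assms unfolding mat_ge_def by simp

lemma nonneg_mat_mult:
  assumes A: "A \<in> carrier_mat nr n" and B: "B \<in> carrier_mat n nc"
    and "nonneg_mat A" and "nonneg_mat B"
  shows "nonneg_mat (A * B)"
  unfolding nonneg_mat_def
proof (intro allI impI)
  fix i j assume "i < dim_row (A * B)" "j < dim_col (A * B)"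
  then have ij: "i < nr" "j < nc" using A B by auto
  show "0 \<le> (A * B) $$ (i, j)"
    unfolding index_mult_mat_sum[OF A B ij]
    using assms ij by (intro sum_nonneg mult_nonneg_nonneg) (auto simp: nonneg_mat_def)
qed

lemma nonneg_mat_pow:
  assumes A: "A \<in> carrier_mat n n" and "nonneg_mat A"
  shows "nonneg_mat (A ^\<^sub>m k)"
proof (induction k)
  case 0
  show ?case using A by (auto simp: nonneg_mat_def)
next
  case (Suc k)
  show ?case using nonneg_mat_mult[OF pow_carrier_mat[OF A] A Suc \<open>nonneg_mat A\<close>] by simp
qed

lemma nonneg_mat_mult_vec_mono:
  assumes M: "M \<in> carrier_mat nr n" "nonneg_mat M"
    and u: "u \<in> carrier_vec n" and w: "w \<in> carrier_vec n"
    and le: "\<forall>l<n. u $ l \<le> w $ l" and i: "i < nr"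
  shows "(M *\<^sub>v u) $ i \<le> (M *\<^sub>v w) $ i"
  unfolding mult_mat_vec_index_sum[OF M(1) u i] mult_mat_vec_index_sum[OF M(1) w i]
  using M le i by (intro sum_mono mult_left_mono) (auto simp: nonneg_mat_def)

lemma nonneg_mat_mult_vec_nonneg:
  assumes M: "M \<in> carrier_mat nr n" "nonneg_mat M"
    and v: "v \<in> carrier_vec n" "\<forall>l<n. 0 \<le> v $ l" and i: "i < nr"
  shows "0 \<le> (M *\<^sub>v v) $ i"
  unfolding mult_mat_vec_index_sum[OF M(1) v(1) i]
  using M v i by (intro sum_nonneg mult_nonneg_nonneg) (auto simp: nonneg_mat_def)

lemma pow_mat_mult_vec_lower_bound:
  assumes D: "D \<in> carrier_mat n n" "nonneg_mat D" and y: "y \<in> carrier_vec n"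
    and q: "0 \<le> q" and Dy: "\<forall>i<n. q * y $ i \<le> (D *\<^sub>v y) $ i"
  shows "\<forall>i<n. q ^ k * y $ i \<le> (D ^\<^sub>m k *\<^sub>v y) $ i"
proof (induction k)
  case 0
  show ?case using D y by simp
next
  case (Suc k)
  have Dk: "D ^\<^sub>m k \<in> carrier_mat n n" using D by simp
  show ?case
  proof (intro allI impI)
    fix i assume i: "i < n"
    have "q ^ Suc k * y $ i = q * (q ^ k * y $ i)" by simp
    also have "\<dots> \<le> q * (D ^\<^sub>m k *\<^sub>v y) $ i" using Suc i q by (intro mult_left_mono) auto
    also have "\<dots> = (D ^\<^sub>m k *\<^sub>v (q \<cdot>\<^sub>v y)) $ i"
      using Dk y i by (simp add: mult_mat_vec_index_sum sum_distrib_left algebra_simps)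
    also have "\<dots> \<le> (D ^\<^sub>m k *\<^sub>v (D *\<^sub>v y)) $ i"
      using Dy D y i by (intro nonneg_mat_mult_vec_mono[OF Dk nonneg_mat_pow[OF D]]) auto
    also have "\<dots> = (D ^\<^sub>m Suc k *\<^sub>v y) $ i"
      using assoc_mult_mat_vec[OF Dk D(1) y] by simp
    finally show "q ^ Suc k * y $ i \<le> (D ^\<^sub>m Suc k *\<^sub>v y) $ i" .
  qed
qed

lemma rho_eigenvector:
  assumes H: "H \<in> carrier_mat n n" and n: "0 < n"
  obtains lam v where "v \<in> carrier_vec n" "v \<noteq> 0\<^sub>v n"
    "map_mat complex_of_real H *\<^sub>v v = lam \<cdot>\<^sub>v v" "rho H = norm lam"
proof -
  have Hc: "map_mat complex_of_real H \<in> carrier_mat n n" using H by simp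
  from spectral_radius_mem_max(1)[OF Hc n] obtain lam
    where "lam \<in> spectrum (map_mat complex_of_real H)" "rho H = norm lam"
    unfolding rho_def by auto
  with that Hc show ?thesis unfolding spectrum_def eigenvalue_def eigenvector_def by auto
qed

lemma rho_nonneg:
  assumes "H \<in> carrier_mat n n" and "0 < n"
  shows "0 \<le> rho H"
  using rho_eigenvector[OF assms] by (metis norm_ge_zero)

lemma rho_less_if_pos_vec:
  assumes H: "H \<in> carrier_mat n n" and n: "0 < n" and Hnn: "nonneg_mat H"
    and x: "x \<in> carrier_vec n" and xpos: "\<forall>i<n. 0 < x $ i"
    and Hx: "\<forall>i<n. (H *\<^sub>v x) $ i < c * x $ i"
  shows "rho H < c"
proof -
  define Hc where "Hc = map_mat complex_of_real H"
  have Hc: "Hc \<in> carrier_mat n n" using H unfolding Hc_def by simp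
  obtain lam v where v: "v \<in> carrier_vec n" "v \<noteq> 0\<^sub>v n" "Hc *\<^sub>v v = lam \<cdot>\<^sub>v v"
    and rl: "rho H = norm lam"
    using rho_eigenvector[OF H n] unfolding Hc_def by metis
  define r where "r i = norm (v $ i) / x $ i" for i
  have "Max (r ` {..<n}) \<in> r ` {..<n}" using n by (intro Max_in) auto
  then obtain i0 where i0: "i0 < n" "r i0 = Max (r ` {..<n})" by auto
  have rle: "r l \<le> r i0" if "l < n" for l
    using i0 that by simp
  obtain j where j: "j < n" "v $ j \<noteq> 0" using nonzero_vec_index[OF v(1,2)] .
  have "0 < r j" unfolding r_def using j xpos by simp
  then have rpos: "0 < r i0" using rle[OF j(1)] by linarith
  have vbound: "norm (v $ l) \<le> r i0 * x $ l" if "l < n" for l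
    using rle[OF that] xpos that unfolding r_def by (simp add: field_simps)
  have "norm lam * norm (v $ i0) = norm ((Hc *\<^sub>v v) $ i0)"
    using v i0 by (simp add: norm_mult)
  also have "\<dots> \<le> (\<Sum>l<n. norm (Hc $$ (i0, l) * v $ l))"
    unfolding mult_mat_vec_index_sum[OF Hc v(1) i0(1)] by (rule norm_sum)
  also have "\<dots> \<le> (\<Sum>l<n. H $$ (i0, l) * (r i0 * x $ l))"
  proof (intro sum_mono)
    fix l assume l: "l \<in> {..<n}"
    have h: "0 \<le> H $$ (i0, l)" using Hnn H i0 l unfolding nonneg_mat_def by auto
    have "norm (Hc $$ (i0, l) * v $ l) = H $$ (i0, l) * norm (v $ l)"
      using H i0 l h unfolding Hc_def by (simp add: norm_mult)
    also have "\<dots> \<le> H $$ (i0, l) * (r i0 * x $ l)" using vbound l h by (intro mult_left_mono) auto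
    finally show "norm (Hc $$ (i0, l) * v $ l) \<le> H $$ (i0, l) * (r i0 * x $ l)" .
  qed
  also have "\<dots> = r i0 * (H *\<^sub>v x) $ i0"
    unfolding mult_mat_vec_index_sum[OF H x i0(1)] by (simp add: sum_distrib_left algebra_simps)
  also have "\<dots> < r i0 * (c * x $ i0)" using Hx i0 rpos by simp
  also have "\<dots> = c * norm (v $ i0)" unfolding r_def using xpos[rule_format, OF i0(1)] by simp
  finally have "norm lam * norm (v $ i0) < c * norm (v $ i0)" .
  then show ?thesis using rl by (metis mult_less_cancel_right norm_ge_zero not_less)
qed

lemma pow_mat_bounded_if_rho_less_1:
  fixes B :: "real mat"
  assumes B: "B \<in> carrier_mat n n" and "rho B < 1"
  obtains c where "\<And>k i j. i < n \<Longrightarrow> j < n \<Longrightarrow> (B ^\<^sub>m k) $$ (i, j) \<le> c"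
proof -
  define C where "C = map_mat complex_of_real B"
  have C: "C \<in> carrier_mat n n" using B unfolding C_def by simp
  obtain c where c: "\<forall>k. norm_bound (C ^\<^sub>m k) c"
    using spectral_radius_jnf_norm_bound_less_1_upper_triangular[OF C] assms(2)
    unfolding rho_def C_def by auto
  have "(B ^\<^sub>m k) $$ (i, j) \<le> c" if "i < n" "j < n" for k i j
  proof -
    have "C ^\<^sub>m k = map_mat complex_of_real (B ^\<^sub>m k)"
      unfolding C_def by (rule of_real_hom.mat_hom_pow[OF B, symmetric])
    then have "(C ^\<^sub>m k) $$ (i, j) = complex_of_real ((B ^\<^sub>m k) $$ (i, j))" using that B by simp
    moreover have "norm ((C ^\<^sub>m k) $$ (i, j)) \<le> c" using c that C unfolding norm_bound_def by auto
    ultimately show ?thesis by auto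
  qed
  then show ?thesis using that by blast
qed

lemma rho_divide_le:
  assumes B: "B \<in> carrier_mat n n" and n: "0 < n" and s: "0 < s"
  shows "s * rho (map_mat (\<lambda>a. a / s) B) \<le> rho B"
proof -
  define Bc where "Bc = map_mat complex_of_real B"
  have Bc: "Bc \<in> carrier_mat n n" using B unfolding Bc_def by simp
  have D: "map_mat (\<lambda>a. a / s) B \<in> carrier_mat n n" using B by simp
  obtain mu v where v: "v \<in> carrier_vec n" "v \<noteq> 0\<^sub>v n"
    and eig: "map_mat complex_of_real (map_mat (\<lambda>a. a / s) B) *\<^sub>v v = mu \<cdot>\<^sub>v v"
    and rm: "rho (map_mat (\<lambda>a. a / s) B) = norm mu"
    using rho_eigenvector[OF D n] by metis
  have "Bc *\<^sub>v v = (of_real s * mu) \<cdot>\<^sub>v v"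
  proof (rule eq_vecI)
    fix i assume "i < dim_vec ((of_real s * mu) \<cdot>\<^sub>v v)"
    then have i: "i < n" using v by simp
    have Dc: "map_mat complex_of_real (map_mat (\<lambda>a. a / s) B) \<in> carrier_mat n n" using B by simp
    have "(Bc *\<^sub>v v) $ i
        = of_real s * (map_mat complex_of_real (map_mat (\<lambda>a. a / s) B) *\<^sub>v v) $ i"
      unfolding mult_mat_vec_index_sum[OF Bc v(1) i] mult_mat_vec_index_sum[OF Dc v(1) i]
      using B i s unfolding Bc_def by (simp add: sum_distrib_left)
    then show "(Bc *\<^sub>v v) $ i = ((of_real s * mu) \<cdot>\<^sub>v v) $ i" using eig v i by simp
  qed (use v Bc in auto)
  then have "of_real s * mu \<in> spectrum Bc"
    using v Bc unfolding spectrum_def eigenvalue_def eigenvector_def by auto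
  then have "norm (of_real s * mu) \<le> rho B"
    using spectral_radius_mem_max(2)[OF Bc n] unfolding rho_def Bc_def by auto
  then show ?thesis using s rm by (simp add: norm_mult)
qed

text \<open>A Collatz--Wielandt lower bound: if \<open>r y \<le> B y\<close> for some nonzero \<open>y \<ge> 0\<close> but \<open>\<rho>(B) < s < r\<close>,
  then the powers of \<open>B/s\<close> stay bounded while \<open>(B/s)\<^sup>k y \<ge> (r/s)\<^sup>k y\<close> grows.\<close>
lemma rho_ge_if_nonneg_vec:
  assumes B: "B \<in> carrier_mat n n" and Bnn: "nonneg_mat B"
    and y: "y \<in> carrier_vec n" and ynn: "\<forall>i<n. 0 \<le> y $ i" and j: "j < n" "0 < y $ j"
    and By: "\<forall>i<n. r * y $ i \<le> (B *\<^sub>v y) $ i"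
  shows "r \<le> rho B"
proof (rule ccontr)
  assume "\<not> r \<le> rho B"
  have n: "0 < n" using j by simp
  define s where "s = (rho B + r) / 2"
  have s: "0 < s" "rho B < s" "s < r"
    using \<open>\<not> r \<le> rho B\<close> rho_nonneg[OF B n] unfolding s_def by auto
  define D where "D = map_mat (\<lambda>a. a / s) B"
  have D: "D \<in> carrier_mat n n" using B unfolding D_def by simp
  have Dnn: "nonneg_mat D" using Bnn B s unfolding D_def nonneg_mat_def by auto
  have "s * rho D < s * 1" using rho_divide_le[OF B n s(1)] s(2) unfolding D_def by simp
  then obtain c where c: "\<And>k i l. i < n \<Longrightarrow> l < n \<Longrightarrow> (D ^\<^sub>m k) $$ (i, l) \<le> c"
    using pow_mat_bounded_if_rho_less_1[OF D] s(1) by (metis mult_less_cancel_left_pos)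
  have Dy: "\<forall>i<n. (r / s) * y $ i \<le> (D *\<^sub>v y) $ i"
  proof (intro allI impI)
    fix i assume i: "i < n"
    have "(D *\<^sub>v y) $ i = (B *\<^sub>v y) $ i / s"
      unfolding mult_mat_vec_index_sum[OF D y i] mult_mat_vec_index_sum[OF B y i]
      using B i unfolding D_def by (simp add: sum_divide_distrib)
    then show "(r / s) * y $ i \<le> (D *\<^sub>v y) $ i" using By i s by (simp add: divide_right_mono)
  qed
  have bound: "(r / s) ^ k * y $ j \<le> c * (\<Sum>l<n. y $ l)" for k
  proof -
    have "(r / s) ^ k * y $ j \<le> (D ^\<^sub>m k *\<^sub>v y) $ j"
      using pow_mat_mult_vec_lower_bound[OF D Dnn y _ Dy] s j by simp
    also have "\<dots> = (\<Sum>l<n. (D ^\<^sub>m k) $$ (j, l) * y $ l)"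
      by (rule mult_mat_vec_index_sum[OF pow_carrier_mat[OF D] y j(1)])
    also have "\<dots> \<le> (\<Sum>l<n. c * y $ l)"
      using c j ynn by (intro sum_mono mult_right_mono) auto
    finally show ?thesis by (simp add: sum_distrib_left)
  qed
  have "1 < r / s" using s by simp
  then obtain k where "c * (\<Sum>l<n. y $ l) / y $ j < (r / s) ^ k" using real_arch_pow by blast
  then have "c * (\<Sum>l<n. y $ l) < (r / s) ^ k * y $ j" using j by (simp add: pos_divide_less_eq)
  with bound[of k] show False by simp
qed

lemma rho_mono:
  assumes H1: "H1 \<in> carrier_mat n n" and n: "0 < n"
    and H1nn: "nonneg_mat H1" and le: "mat_ge H2 H1"
  shows "rho H1 \<le> rho H2"
proof -
  have H2: "H2 \<in> carrier_mat n n" using H1 le unfolding mat_ge_def by auto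
  have H12: "H1 $$ (i, l) \<le> H2 $$ (i, l)" if "i < n" "l < n" for i l
    using le H2 that unfolding mat_ge_def by auto
  have "0 \<le> H2 $$ (i, l)" if "i < n" "l < n" for i l
    using H1nn H1 H12[OF that] that unfolding nonneg_mat_def by fastforce
  then have H2nn: "nonneg_mat H2" using H2 unfolding nonneg_mat_def by auto
  define Hc where "Hc = map_mat complex_of_real H1"
  have Hc: "Hc \<in> carrier_mat n n" using H1 unfolding Hc_def by simp
  obtain lam v where v: "v \<in> carrier_vec n" "v \<noteq> 0\<^sub>v n" "Hc *\<^sub>v v = lam \<cdot>\<^sub>v v"
    and rl: "rho H1 = norm lam"
    using rho_eigenvector[OF H1 n] unfolding Hc_def by metis
  obtain j where j: "j < n" "v $ j \<noteq> 0" using nonzero_vec_index[OF v(1,2)] .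
  define y where "y = vec n (\<lambda>i. norm (v $ i))"
  have y: "y \<in> carrier_vec n" unfolding y_def by simp
  show ?thesis
  proof (rule rho_ge_if_nonneg_vec[OF H2 H2nn y _ j(1)])
    show "\<forall>i<n. 0 \<le> y $ i" "0 < y $ j" unfolding y_def using j by simp_all
    show "\<forall>i<n. rho H1 * y $ i \<le> (H2 *\<^sub>v y) $ i"
    proof (intro allI impI)
      fix i assume i: "i < n"
      have "rho H1 * y $ i = norm ((Hc *\<^sub>v v) $ i)"
        using v i rl unfolding y_def by (simp add: norm_mult)
      also have "\<dots> \<le> (\<Sum>l<n. norm (Hc $$ (i, l) * v $ l))"
        unfolding mult_mat_vec_index_sum[OF Hc v(1) i] by (rule norm_sum)
      also have "\<dots> \<le> (\<Sum>l<n. H2 $$ (i, l) * y $ l)"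
      proof (intro sum_mono)
        fix l assume l: "l \<in> {..<n}"
        have "norm (Hc $$ (i, l) * v $ l) = H1 $$ (i, l) * y $ l"
          using H1 H1nn i l unfolding Hc_def y_def nonneg_mat_def by (simp add: norm_mult)
        also have "\<dots> \<le> H2 $$ (i, l) * y $ l"
          using H12 i l unfolding y_def by (intro mult_right_mono) auto
        finally show "norm (Hc $$ (i, l) * v $ l) \<le> H2 $$ (i, l) * y $ l" .
      qed
      also have "\<dots> = (H2 *\<^sub>v y) $ i" by (rule mult_mat_vec_index_sum[OF H2 y i, symmetric])
      finally show "rho H1 * y $ i \<le> (H2 *\<^sub>v y) $ i" .
    qed
  qed
qed

section \<open>Moore--Penrose inverses and proper splittings\<close>

lemma det_gram_mat_nonzero:
  assumes M: "M \<in> carrier_mat m n" and N: "null_mat M = {0\<^sub>v n}"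
  shows "det (transpose_mat M * M) \<noteq> 0"
proof
  assume "det (transpose_mat M * M) = 0"
  then obtain v where v: "v \<in> carrier_vec n" "v \<noteq> 0\<^sub>v n" "transpose_mat M * M *\<^sub>v v = 0\<^sub>v n"
    using det_0_iff_vec_prod_zero_field[of "transpose_mat M * M" n] M by auto
  have Mv: "M *\<^sub>v v \<in> carrier_vec m" using M v by simp
  have "(M *\<^sub>v v) \<bullet> (M *\<^sub>v v) = (transpose_mat M *\<^sub>v (M *\<^sub>v v)) \<bullet> v"
    by (rule transpose_vec_mult_scalar[OF M v(1) Mv, symmetric])
  also have "\<dots> = 0"
    using v assoc_mult_mat_vec[of "transpose_mat M" n m M n v] M by simp
  finally have "M *\<^sub>v v = 0\<^sub>v m" by (rule real_scalar_prod_self_eq_0[OF Mv])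
  then have "v \<in> null_mat M" using M v unfolding null_mat_def by simp
  with N v show False by simp
qed

lemma mp_inverse_full_column_rank:
  assumes M: "M \<in> carrier_mat m n" and N: "null_mat M = {0\<^sub>v n}"
  shows "is_mp_inverse M (mp_inverse M)" and "mp_inverse M * M = 1\<^sub>m n"
proof -
  define Mt where "Mt = transpose_mat M"
  define G where "G = Mt * M"
  have Mt: "Mt \<in> carrier_mat n m" and G: "G \<in> carrier_mat n n"
    using M unfolding Mt_def G_def by auto
  have Gt: "transpose_mat G = G"
    unfolding G_def Mt_def using transpose_mult[of "transpose_mat M" n m M n] M by simp
  obtain Gi where Gi: "Gi \<in> carrier_mat n n" "Gi * G = 1\<^sub>m n" "G * Gi = 1\<^sub>m n"
    using det_non_zero_imp_unit[OF G] det_gram_mat_nonzero[OF M N]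
    unfolding Units_def G_def Mt_def by (auto simp: ring_mat_def)
  have Git: "transpose_mat Gi = Gi"
  proof -
    have "transpose_mat Gi * G = 1\<^sub>m n" using transpose_mult[OF G Gi(1)] Gi Gt by simp
    then have "transpose_mat Gi = transpose_mat Gi * G * Gi"
      using Gi by (metis right_mult_one_mat assoc_mult_mat transpose_carrier_mat G)
    then show ?thesis using \<open>transpose_mat Gi * G = 1\<^sub>m n\<close> Gi by simp
  qed
  define X where "X = Gi * Mt"
  have X: "X \<in> carrier_mat n m" using Gi Mt unfolding X_def by simp
  have XM: "X * M = 1\<^sub>m n" unfolding X_def using Gi Mt M by (simp add: G_def[symmetric])
  have mp: "is_mp_inverse M X"
    unfolding is_mp_inverse_def
  proof (intro conjI)
    have "transpose_mat X = M * Gi"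
      unfolding X_def Mt_def using transpose_mult[of Gi n n "transpose_mat M" m] Gi M Git by simp
    then show "transpose_mat (M * X) = M * X"
      using transpose_mult[OF M X] M Gi Mt unfolding X_def Mt_def by simp
  qed (use M X XM in auto)
  have "Y = X" if Y: "is_mp_inverse M Y" for Y
  proof -
    from Y have Yc: "Y \<in> carrier_mat n m" and MYM: "M * Y * M = M"
      and sym: "transpose_mat (M * Y) = M * Y"
      using M unfolding is_mp_inverse_def by auto
    have "G * Y = Mt * transpose_mat (M * Y)" unfolding G_def sym using Mt M Yc by simp
    also have "\<dots> = transpose_mat (M * Y * M)"
      unfolding Mt_def using transpose_mult[OF mult_carrier_mat[OF M Yc] M] by simp
    finally have "G * Y = Mt" using MYM Mt_def by simp
    then show ?thesis
      using assoc_mult_mat[OF Gi(1) G Yc] Gi(2) Yc unfolding X_def by simp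
  qed
  then have "mp_inverse M = X" unfolding mp_inverse_def using mp by (rule the_equality[rotated])
  then show "is_mp_inverse M (mp_inverse M)" and "mp_inverse M * M = 1\<^sub>m n" using mp XM by simp_all
qed

lemma range_mat_subset_factor:
  assumes U: "U \<in> carrier_mat m q" and A: "A \<in> carrier_mat m n"
    and R: "range_mat U \<subseteq> range_mat A"
  obtains Y where "Y \<in> carrier_mat n q" and "A * Y = U"
proof -
  have "\<exists>y. y \<in> carrier_vec n \<and> A *\<^sub>v y = col U j" if j: "j < q" for j
  proof -
    have "col U j = U *\<^sub>v unit_vec q j" using U j by (intro eq_vecI) auto
    then have "col U j \<in> range_mat U" using U unfolding range_mat_def by auto
    then have "col U j \<in> range_mat A" using R by auto
    then show ?thesis using A unfolding range_mat_def by auto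
  qed
  then obtain y where y: "\<And>j. j < q \<Longrightarrow> y j \<in> carrier_vec n \<and> A *\<^sub>v y j = col U j" by metis
  define Y where "Y = mat n q (\<lambda>(i, j). y j $ i)"
  have "A * Y = U"
  proof (rule eq_matI)
    fix i j assume "i < dim_row U" "j < dim_col U"
    then have ij: "i < m" "j < q" using U by auto
    have "col Y j = y j" unfolding Y_def using ij y[of j] by (intro eq_vecI) auto
    then have "(A * Y) $$ (i, j) = (A *\<^sub>v y j) $ i" using A ij unfolding Y_def by simp
    then show "(A * Y) $$ (i, j) = U $$ (i, j)" using y U ij by simp
  qed (use A U in \<open>auto simp: Y_def\<close>)
  moreover have "Y \<in> carrier_mat n q" unfolding Y_def by simp
  ultimately show ?thesis using that by blast
qed

text \<open>\<open>U Y\<close> and \<open>A X\<close> are the orthogonal projections onto \<open>R(U) \<subseteq> R(A)\<close>, so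
  \<open>A X U Y = U Y\<close>; transposing gives \<open>U Y A X = U Y\<close>.\<close>
lemma mp_inverse_mult_range_proj:
  assumes A: "A \<in> carrier_mat m n" and U: "U \<in> carrier_mat m q"
    and X: "is_mp_inverse A X" and Y: "is_mp_inverse U Y"
    and R: "range_mat U \<subseteq> range_mat A"
  shows "Y * (A * X) = Y"
proof -
  have Xc: "X \<in> carrier_mat n m" and AXA: "A * X * A = A"
    and Qs: "transpose_mat (A * X) = A * X"
    using X A unfolding is_mp_inverse_def by auto
  have Yc: "Y \<in> carrier_mat q m" and YUY: "Y * U * Y = Y"
    and Ps: "transpose_mat (U * Y) = U * Y"
    using Y U unfolding is_mp_inverse_def by auto
  define Q where "Q = A * X"
  define P where "P = U * Y"
  have Q: "Q \<in> carrier_mat m m" and P: "P \<in> carrier_mat m m"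
    unfolding Q_def P_def using A Xc U Yc by auto
  obtain Z where Z: "Z \<in> carrier_mat n q" and AZ: "A * Z = U"
    using range_mat_subset_factor[OF U A R] .
  have "Q * U = U"
    unfolding Q_def AZ[symmetric] using AXA assoc_mult_mat[OF mult_carrier_mat[OF A Xc] A Z] by simp
  then have "Q * P = P" unfolding P_def using Q U Yc by (metis assoc_mult_mat)
  then have PQ: "P * Q = P"
    using transpose_mult[OF Q P] Ps Qs unfolding P_def Q_def by simp
  have YP: "Y * P = Y" unfolding P_def using YUY assoc_mult_mat[OF Yc U Yc] by simp
  then have "Y * Q = Y * P * Q" by simp
  also have "\<dots> = Y" using assoc_mult_mat[OF Yc P Q] PQ YP by simp
  finally show ?thesis unfolding Q_def .
qed

lemma proper_splitting_mp_inverse: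
  assumes A: "A \<in> carrier_mat m n" and N: "null_mat A = {0\<^sub>v n}"
    and S: "proper_splitting A U V"
  shows "mp_inverse U \<in> carrier_mat n m"
    and "mp_inverse U * U = 1\<^sub>m n"
    and "mp_inverse U * V = 1\<^sub>m n - mp_inverse U * A"
    and "mp_inverse U * V * mp_inverse A = mp_inverse A - mp_inverse U"
    and "mp_inverse U * V \<in> carrier_mat n n"
proof -
  from S have U: "U \<in> carrier_mat m n" and V: "V \<in> carrier_mat m n" and AUV: "A = U - V"
    and R: "range_mat U = range_mat A" and NU: "null_mat U = {0\<^sub>v n}"
    unfolding proper_splitting_def using A N by auto
  define Ui where "Ui = mp_inverse U"
  define Ai where "Ai = mp_inverse A"
  have mpU: "is_mp_inverse U Ui" and UiU: "Ui * U = 1\<^sub>m n"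
    using mp_inverse_full_column_rank[OF U NU] unfolding Ui_def by auto
  have mpA: "is_mp_inverse A Ai"
    using mp_inverse_full_column_rank[OF A N] unfolding Ai_def by auto
  have Ui: "Ui \<in> carrier_mat n m" and Ai: "Ai \<in> carrier_mat n m"
    using mpU mpA U A unfolding is_mp_inverse_def by auto
  have "V = U - A" unfolding AUV using U V by (intro eq_matI) auto
  then have UiV: "Ui * V = 1\<^sub>m n - Ui * A" using mult_minus_distrib_mat[OF Ui U A] UiU by simp
  have "Ui * V * Ai = Ai - Ui * (A * Ai)"
    unfolding UiV using minus_mult_distrib_mat[of "1\<^sub>m n" n n "Ui * A" Ai m] Ui A Ai by simp
  also have "Ui * (A * Ai) = Ui"
    using mp_inverse_mult_range_proj[OF A U mpA mpU] R by simp
  finally show "mp_inverse U * V * mp_inverse A = mp_inverse A - mp_inverse U"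
    unfolding Ui_def Ai_def .
  show "mp_inverse U \<in> carrier_mat n m" "mp_inverse U * U = 1\<^sub>m n"
    "mp_inverse U * V = 1\<^sub>m n - mp_inverse U * A" "mp_inverse U * V \<in> carrier_mat n n"
    using Ui UiU UiV mult_carrier_mat[OF Ui V] unfolding Ui_def by simp_all
qed

lemma proper_splitting_iter_mono:
  assumes A: "A \<in> carrier_mat m n" and N: "null_mat A = {0\<^sub>v n}" and Ann: "nonneg_mat A"
    and S1: "proper_splitting A U1 V1" and S2: "proper_splitting A U2 V2"
    and ge: "mat_ge (mp_inverse U1) (mp_inverse U2)"
  shows "mat_ge (mp_inverse U2 * V2) (mp_inverse U1 * V1)"
proof -
  note S1' = proper_splitting_mp_inverse[OF A N S1]
  note S2' = proper_splitting_mp_inverse[OF A N S2]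
  have V1: "V1 \<in> carrier_mat m n" and V2: "V2 \<in> carrier_mat m n"
    using S1 S2 A unfolding proper_splitting_def by auto
  have entry: "(mp_inverse U * V) $$ (i, j)
      = of_bool (i = j) - (\<Sum>l<m. mp_inverse U $$ (i, l) * A $$ (l, j))"
    if "mp_inverse U * V = 1\<^sub>m n - mp_inverse U * A" "mp_inverse U \<in> carrier_mat n m"
      "i < n" "j < n" for U V i j
    using that(1) index_mult_mat_sum[OF that(2) A that(3,4)] that A by simp
  have "(mp_inverse U1 * V1) $$ (i, j) \<le> (mp_inverse U2 * V2) $$ (i, j)"
    if ij: "i < n" "j < n" for i j
    unfolding entry[OF S1'(3,1) ij] entry[OF S2'(3,1) ij]
    using ge Ann S1'(1) A ij unfolding mat_ge_def nonneg_mat_def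
    by (auto intro!: sum_mono mult_right_mono)
  then show ?thesis using S1'(1) S2'(1) V1 V2 unfolding mat_ge_def by auto
qed

lemma nonneg_left_inverse_row_sum_pos:
  assumes X: "X \<in> carrier_mat n m" and U: "U \<in> carrier_mat m n"
    and Xnn: "nonneg_mat X" and XU: "X * U = 1\<^sub>m n" and i: "i < n"
  shows "0 < (X *\<^sub>v vec m (\<lambda>_. 1)) $ i"
proof -
  have "(\<Sum>l<m. X $$ (i, l) * U $$ (l, i)) = 1"
    using index_mult_mat_sum[OF X U i i] XU i by simp
  then obtain l where l: "l < m" "X $$ (i, l) \<noteq> 0"
    by (metis (no_types, lifting) lessThan_iff mult_eq_0_iff sum.neutral zero_neq_one)
  have "0 < (\<Sum>l<m. X $$ (i, l))"
    using l Xnn X i by (intro sum_pos2[of _ l]) (auto simp: nonneg_mat_def order.strict_iff_order)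
  moreover have "(X *\<^sub>v vec m (\<lambda>_. 1)) $ i = (\<Sum>l<m. X $$ (i, l) * vec m (\<lambda>_. 1) $ l)"
    by (rule mult_mat_vec_index_sum[OF X _ i]) simp
  ultimately show ?thesis by simp
qed

section \<open>Multisplittings\<close>

lemma mat_sum_carrier:
  assumes "\<forall>k<p. f k \<in> carrier_mat nr nc"
  shows "mat_sum nr nc f p \<in> carrier_mat nr nc"
  using assms by (induction p) auto

lemma mat_sum_index:
  assumes "\<forall>k<p. f k \<in> carrier_mat nr nc" and "i < nr" and "j < nc"
  shows "mat_sum nr nc f p $$ (i, j) = (\<Sum>k<p. f k $$ (i, j))"
  using assms
proof (induction p)
  case (Suc p)
  have "f p \<in> carrier_mat nr nc" using Suc.prems(1) by simp
  moreover have "mat_sum nr nc f p \<in> carrier_mat nr nc" using Suc.prems(1) mat_sum_carrier by simp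
  ultimately have "mat_sum nr nc f (Suc p) $$ (i, j) = mat_sum nr nc f p $$ (i, j) + f p $$ (i, j)"
    using Suc.prems(2,3) by simp
  then show ?case using Suc by simp
qed simp

lemma mat_sum_scalar_prod:
  assumes f: "\<forall>k<p. f k \<in> carrier_mat nr nc"
    and v: "v \<in> carrier_vec nc" and w: "w \<in> carrier_vec nr"
  shows "w \<bullet> (mat_sum nr nc f p *\<^sub>v v) = (\<Sum>k<p. w \<bullet> (f k *\<^sub>v v))"
  using f
proof (induction p)
  case 0
  have "0\<^sub>m nr nc *\<^sub>v v = 0\<^sub>v nr" using v by (intro eq_vecI) (auto simp: scalar_prod_def)
  then show ?case using w by simp
next
  case (Suc p)
  have S: "mat_sum nr nc f p \<in> carrier_mat nr nc" and fp: "f p \<in> carrier_mat nr nc"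
    using Suc.prems mat_sum_carrier[of p f nr nc] by auto
  have "w \<bullet> (mat_sum nr nc f (Suc p) *\<^sub>v v)
      = w \<bullet> (mat_sum nr nc f p *\<^sub>v v) + w \<bullet> (f p *\<^sub>v v)"
    using add_mult_distrib_mat_vec[OF S fp v] scalar_prod_add_distrib[OF w] S fp v by simp
  then show ?case using Suc by simp
qed

lemma diagonal_mat_mult_index:
  fixes E M :: "'a :: comm_semiring_0 mat"
  assumes E: "E \<in> carrier_mat n n" "diagonal_mat E" and M: "M \<in> carrier_mat n q"
    and ij: "i < n" "j < q"
  shows "(E * M) $$ (i, j) = E $$ (i, i) * M $$ (i, j)"
proof -
  have "(E * M) $$ (i, j) = (\<Sum>l\<in>{i}. E $$ (i, l) * M $$ (l, j))"
    unfolding index_mult_mat_sum[OF E(1) M ij]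
    using E ij by (intro sum.mono_neutral_right) (auto simp: diagonal_mat_def)
  then show ?thesis by simp
qed

text \<open>For \<open>w \<in> N(A)\<close>, each \<open>E\<^sub>k w = A\<^sup>T y\<^sub>k\<close> is orthogonal to \<open>w\<close>, and these sum up to \<open>w\<close>.\<close>
lemma null_mat_trivial_if_weights_in_range_transpose:
  assumes A: "A \<in> carrier_mat m n" and E: "\<forall>k<p. E k \<in> carrier_mat n n"
    and sumE: "mat_sum n n E p = 1\<^sub>m n"
    and R: "\<forall>k<p. range_mat (E k) \<subseteq> range_mat (transpose_mat A)"
  shows "null_mat A = {0\<^sub>v n}"
proof
  show "{0\<^sub>v n} \<subseteq> null_mat A" using A unfolding null_mat_def by auto
  show "null_mat A \<subseteq> {0\<^sub>v n}"
  proof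
    fix w assume "w \<in> null_mat A"
    then have w: "w \<in> carrier_vec n" and Aw: "A *\<^sub>v w = 0\<^sub>v m"
      using A unfolding null_mat_def by auto
    have orth: "w \<bullet> (E k *\<^sub>v w) = 0" if k: "k < p" for k
    proof -
      have "E k *\<^sub>v w \<in> range_mat (E k)" unfolding range_mat_def using E k w by auto
      with R k obtain y where y: "y \<in> carrier_vec m" "E k *\<^sub>v w = transpose_mat A *\<^sub>v y"
        unfolding range_mat_def using A by auto
      have "w \<bullet> (E k *\<^sub>v w) = (transpose_mat A *\<^sub>v y) \<bullet> w"
        unfolding y(2) using A y w by (intro comm_scalar_prod[of _ n]) auto
      also have "\<dots> = y \<bullet> (A *\<^sub>v w)" by (rule transpose_vec_mult_scalar[OF A w y(1)])
      finally show ?thesis using Aw y by simp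
    qed
    have "w \<bullet> w = w \<bullet> (mat_sum n n E p *\<^sub>v w)" unfolding sumE using w by simp
    also have "\<dots> = 0" using mat_sum_scalar_prod[OF E w w] orth by simp
    finally show "w \<in> {0\<^sub>v n}" using real_scalar_prod_self_eq_0[OF w] by simp
  qed
qed

lemma proper_weak_regular_multisplittingD:
  assumes A: "A \<in> carrier_mat m n" and MS: "proper_weak_regular_multisplitting A p U V E"
    and k: "k < p"
  shows "proper_splitting A (U k) (V k)"
    and "nonneg_mat (mp_inverse (U k))" and "nonneg_mat (mp_inverse (U k) * V k)"
    and "E k \<in> carrier_mat n n" and "diagonal_mat (E k)" and "nonneg_mat (E k)"
  using assms
  unfolding proper_weak_regular_multisplitting_def proper_weak_regular_splitting_def by auto

lemma proper_weak_regular_multisplitting_sum: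
  assumes "A \<in> carrier_mat m n" and "proper_weak_regular_multisplitting A p U V E"
  shows "mat_sum n n E p = 1\<^sub>m n"
  using assms unfolding proper_weak_regular_multisplitting_def by simp

lemma multisplitting_iter_index:
  assumes A: "A \<in> carrier_mat m n" and N: "null_mat A = {0\<^sub>v n}"
    and MS: "proper_weak_regular_multisplitting A p U V E"
  shows "multisplitting_iter n p U V E \<in> carrier_mat n n"
    and "\<And>i j. i < n \<Longrightarrow> j < n \<Longrightarrow> multisplitting_iter n p U V E $$ (i, j)
      = (\<Sum>k<p. E k $$ (i, i) * (mp_inverse (U k) * V k) $$ (i, j))"
proof -
  note MS' = proper_weak_regular_multisplittingD[OF A MS]
  note S = proper_splitting_mp_inverse[OF A N MS'(1)]
  have E: "E k \<in> carrier_mat n n" "diagonal_mat (E k)" if "k < p" for k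
    using MS'(4,5) that by blast+
  have UV: "mp_inverse (U k) * V k \<in> carrier_mat n n" if "k < p" for k
    using S(5) that .
  have f: "E k * mp_inverse (U k) * V k = E k * (mp_inverse (U k) * V k)" if k: "k < p" for k
    using E[OF k] S(1)[OF k] MS'(1)[OF k] A
    unfolding proper_splitting_def by (intro assoc_mult_mat) auto
  have fc: "\<forall>k<p. E k * mp_inverse (U k) * V k \<in> carrier_mat n n"
    using f E UV by (metis mult_carrier_mat)
  show "multisplitting_iter n p U V E \<in> carrier_mat n n"
    unfolding multisplitting_iter_def by (rule mat_sum_carrier[OF fc])
  show "multisplitting_iter n p U V E $$ (i, j)
      = (\<Sum>k<p. E k $$ (i, i) * (mp_inverse (U k) * V k) $$ (i, j))" if ij: "i < n" "j < n" for i j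
    unfolding multisplitting_iter_def mat_sum_index[OF fc ij]
  proof (intro sum.cong refl)
    fix k assume "k \<in> {..<p}"
    then show "(E k * mp_inverse (U k) * V k) $$ (i, j)
        = E k $$ (i, i) * (mp_inverse (U k) * V k) $$ (i, j)"
      using f diagonal_mat_mult_index[OF E UV ij] by simp
  qed
qed

lemma multisplitting_iter_mult_vec_index:
  assumes A: "A \<in> carrier_mat m n" and N: "null_mat A = {0\<^sub>v n}"
    and MS: "proper_weak_regular_multisplitting A p U V E"
    and x: "x \<in> carrier_vec n" and i: "i < n"
  shows "(multisplitting_iter n p U V E *\<^sub>v x) $ i
    = (\<Sum>k<p. E k $$ (i, i) * ((mp_inverse (U k) * V k) *\<^sub>v x) $ i)"
proof -
  have UV: "mp_inverse (U k) * V k \<in> carrier_mat n n" if "k < p" for k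
    using proper_splitting_mp_inverse(5)[OF A N proper_weak_regular_multisplittingD(1)[OF A MS that]] .
  note H = multisplitting_iter_index[OF A N MS]
  have "(multisplitting_iter n p U V E *\<^sub>v x) $ i
      = (\<Sum>l<n. \<Sum>k<p. E k $$ (i, i) * (mp_inverse (U k) * V k) $$ (i, l) * x $ l)"
    unfolding mult_mat_vec_index_sum[OF H(1) x i] using i by (simp add: H(2) sum_distrib_right)
  also have "\<dots> = (\<Sum>k<p. E k $$ (i, i) * (\<Sum>l<n. (mp_inverse (U k) * V k) $$ (i, l) * x $ l))"
    by (subst sum.swap) (simp add: sum_distrib_left mult.assoc)
  also have "\<dots> = (\<Sum>k<p. E k $$ (i, i) * ((mp_inverse (U k) * V k) *\<^sub>v x) $ i)"
    using mult_mat_vec_index_sum[OF UV x i] by simp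
  finally show ?thesis .
qed

lemma multisplitting_iter_nonneg:
  assumes A: "A \<in> carrier_mat m n" and N: "null_mat A = {0\<^sub>v n}"
    and MS: "proper_weak_regular_multisplitting A p U V E"
  shows "nonneg_mat (multisplitting_iter n p U V E)"
proof -
  note MS' = proper_weak_regular_multisplittingD[OF A MS]
  note H = multisplitting_iter_index[OF A N MS]
  have "0 \<le> E k $$ (i, i) * (mp_inverse (U k) * V k) $$ (i, j)" if "k < p" "i < n" "j < n" for k i j
    using MS'(3,4,6)[OF that(1)] proper_splitting_mp_inverse(5)[OF A N MS'(1)[OF that(1)]] that(2,3)
    unfolding nonneg_mat_def by (metis carrier_matD mult_nonneg_nonneg)
  then show ?thesis using H unfolding nonneg_mat_def by (auto intro!: sum_nonneg)
qed

lemma multisplitting_iter_mono: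
  assumes A: "A \<in> carrier_mat m n" and N: "null_mat A = {0\<^sub>v n}" and Ann: "nonneg_mat A"
    and MS1: "proper_weak_regular_multisplitting A p U1 V1 E"
    and MS2: "proper_weak_regular_multisplitting A p U2 V2 E"
    and ge: "\<forall>k<p. mat_ge (mp_inverse (U1 k)) (mp_inverse (U2 k))"
  shows "mat_ge (multisplitting_iter n p U2 V2 E) (multisplitting_iter n p U1 V1 E)"
proof -
  note H1 = multisplitting_iter_index[OF A N MS1]
  note H2 = multisplitting_iter_index[OF A N MS2]
  note MS1' = proper_weak_regular_multisplittingD[OF A MS1]
  note MS2' = proper_weak_regular_multisplittingD[OF A MS2]
  have "multisplitting_iter n p U1 V1 E $$ (i, j) \<le> multisplitting_iter n p U2 V2 E $$ (i, j)"
    if ij: "i < n" "j < n" for i j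
    unfolding H1(2)[OF ij] H2(2)[OF ij]
  proof (intro sum_mono mult_left_mono)
    fix k assume "k \<in> {..<p}"
    then have k: "k < p" by simp
    show "0 \<le> E k $$ (i, i)" using nonneg_matD[OF MS1'(6,4)[OF k] ij(1,1)] .
    show "(mp_inverse (U1 k) * V1 k) $$ (i, j) \<le> (mp_inverse (U2 k) * V2 k) $$ (i, j)"
      using mat_geD[OF proper_splitting_iter_mono[OF A N Ann MS1'(1)[OF k] MS2'(1)[OF k]]
          proper_splitting_mp_inverse(5)[OF A N MS2'(1)[OF k]] ij] ge k by simp
  qed
  then show ?thesis using H1(1) H2(1) unfolding mat_ge_def by simp
qed

lemma multisplitting_iter_mult_vec_less:
  assumes A: "A \<in> carrier_mat m n" and N: "null_mat A = {0\<^sub>v n}"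
    and MS: "proper_weak_regular_multisplitting A p U V E" and i: "i < n"
  shows "(multisplitting_iter n p U V E *\<^sub>v (mp_inverse A *\<^sub>v vec m (\<lambda>_. 1))) $ i
    < (mp_inverse A *\<^sub>v vec m (\<lambda>_. 1)) $ i"
proof -
  define one where "one = vec m (\<lambda>_. 1 :: real)"
  define x where "x = mp_inverse A *\<^sub>v one"
  define e where "e k = E k $$ (i, i)" for k
  define b where "b k = (mp_inverse (U k) *\<^sub>v one) $ i" for k
  note MS' = proper_weak_regular_multisplittingD[OF A MS]
  note S = proper_splitting_mp_inverse[OF A N MS'(1)]
  have Ai: "mp_inverse A \<in> carrier_mat n m"
    using mp_inverse_full_column_rank(1)[OF A N] A unfolding is_mp_inverse_def by simp
  have one: "one \<in> carrier_vec m" and x: "x \<in> carrier_vec n"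
    unfolding one_def x_def using Ai by simp_all
  have "(\<Sum>k<p. e k) = 1"
    using mat_sum_index[of p E n n i i] MS'(4) i proper_weak_regular_multisplitting_sum[OF A MS]
    unfolding e_def by simp
  moreover have enn: "0 \<le> e k" if "k < p" for k
    using nonneg_matD[OF MS'(6,4)[OF that] i i] unfolding e_def .
  ultimately obtain k0 where k0: "k0 < p" "0 < e k0"
    by (metis (no_types, lifting) lessThan_iff nless_le sum.neutral zero_neq_one)
  have bpos: "0 < b k" if "k < p" for k
    using nonneg_left_inverse_row_sum_pos[OF S(1)[OF that] _ MS'(2)[OF that] S(2)[OF that] i]
      MS'(1)[OF that] A unfolding b_def one_def proper_splitting_def by simp
  have UVx: "((mp_inverse (U k) * V k) *\<^sub>v x) $ i = x $ i - b k" if k: "k < p" for k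
  proof -
    have "(mp_inverse (U k) * V k) *\<^sub>v x = (mp_inverse (U k) * V k * mp_inverse A) *\<^sub>v one"
      unfolding x_def using assoc_mult_mat_vec[OF S(5)[OF k] Ai one] by simp
    also have "\<dots> = x - mp_inverse (U k) *\<^sub>v one"
      unfolding S(4)[OF k] x_def by (rule minus_mult_distrib_mat_vec[OF Ai S(1)[OF k] one])
    finally show ?thesis unfolding b_def using i x S(1)[OF k] one by simp
  qed
  have "(multisplitting_iter n p U V E *\<^sub>v x) $ i = (\<Sum>k<p. e k * (x $ i - b k))"
    unfolding multisplitting_iter_mult_vec_index[OF A N MS x i] e_def using UVx by simp
  also have "\<dots> = (\<Sum>k<p. e k) * x $ i - (\<Sum>k<p. e k * b k)"
    by (simp add: right_diff_distrib sum_subtractf sum_distrib_right)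
  also have "\<dots> < x $ i"
    using \<open>(\<Sum>k<p. e k) = 1\<close> sum_pos2[of "{..<p}" k0 "\<lambda>k. e k * b k"] k0 enn bpos
    by (simp add: less_imp_le)
  finally show ?thesis unfolding x_def one_def .
qed

lemma multisplitting_iter_rho_less_1:
  assumes A: "A \<in> carrier_mat m n" and n: "0 < n" and N: "null_mat A = {0\<^sub>v n}"
    and Ainn: "nonneg_mat (mp_inverse A)"
    and MS: "proper_weak_regular_multisplitting A p U V E"
  shows "rho (multisplitting_iter n p U V E) < 1"
proof -
  define H where "H = multisplitting_iter n p U V E"
  define x where "x = mp_inverse A *\<^sub>v vec m (\<lambda>_. 1)"
  have H: "H \<in> carrier_mat n n" and Hnn: "nonneg_mat H"
    unfolding H_def using multisplitting_iter_index(1) multisplitting_iter_nonneg A N MS by auto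
  have Ai: "mp_inverse A \<in> carrier_mat n m"
    using mp_inverse_full_column_rank(1)[OF A N] A unfolding is_mp_inverse_def by simp
  have x: "x \<in> carrier_vec n" unfolding x_def using Ai by simp
  have Hx: "(H *\<^sub>v x) $ i < x $ i" if "i < n" for i
    using multisplitting_iter_mult_vec_less[OF A N MS that] unfolding H_def x_def .
  have "0 \<le> x $ i" if "i < n" for i
    unfolding x_def by (rule nonneg_mat_mult_vec_nonneg[OF Ai Ainn _ _ that]) auto
  then have "0 \<le> (H *\<^sub>v x) $ i" if "i < n" for i
    using nonneg_mat_mult_vec_nonneg[OF H Hnn x _ that] by simp
  then have "\<forall>i<n. 0 < x $ i" using Hx by (meson le_less_trans)
  then show ?thesis
    using rho_less_if_pos_vec[OF H n Hnn x, of 1] Hx unfolding H_def by simp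
qed

theorem theorem5p13:
  fixes A :: "real mat" and m n p :: nat
    and U1 V1 U2 V2 E :: "nat \<Rightarrow> real mat"
  assumes "A \<in> carrier_mat m n" and "0 < m" and "0 < n"
    and "nonneg_mat A" and "nonneg_mat (mp_inverse A)"
    and "proper_weak_regular_multisplitting A p U1 V1 E"
    and "proper_weak_regular_multisplitting A p U2 V2 E"
    and "\<forall>k < p. range_mat (E k) \<subseteq> range_mat (transpose_mat A)"
    and "\<forall>k < p. mat_ge (mp_inverse (U1 k)) (mp_inverse (U2 k))"
  shows "rho (multisplitting_iter n p U1 V1 E) \<le> rho (multisplitting_iter n p U2 V2 E)
     \<and> rho (multisplitting_iter n p U2 V2 E) < 1"
proof -
  note A = assms(1) and n = assms(3) and MS1 = assms(6) and MS2 = assms(7)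
  have N: "null_mat A = {0\<^sub>v n}"
    using null_mat_trivial_if_weights_in_range_transpose[OF A _
        proper_weak_regular_multisplitting_sum[OF A MS1] assms(8)]
      proper_weak_regular_multisplittingD(4)[OF A MS1] by blast
  have "rho (multisplitting_iter n p U1 V1 E) \<le> rho (multisplitting_iter n p U2 V2 E)"
    using rho_mono[OF multisplitting_iter_index(1)[OF A N MS1] n
        multisplitting_iter_nonneg[OF A N MS1] multisplitting_iter_mono[OF A N assms(4) MS1 MS2 assms(9)]] .
  moreover have "rho (multisplitting_iter n p U2 V2 E) < 1"
    using multisplitting_iter_rho_less_1[OF A n N assms(5) MS2] .
  ultimately show ?thesis ..
qed

end
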